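(* Let $G=(V,D,B)$ be a mixed graph, $v\in V$, and $Y\subseteq V\setminus(\{v\}\cup\mathrm{sib}(v))$ with $|Y|=|\mathrm{pa}(v)|$. For $(\Lambda,\Omega)\in\Theta$ with $\Sigma=\phi_G(\Lambda,\Omega)$ let $\mathbf{J}=[(I-\Lambda)^T\Sigma]_{Y,\mathrm{pa}(v)}$ (the submatrix with rows $Y$ and columns $\mathrm{pa}(v)$). If $\mathbf{J}$ is generically invertible, i.e. $\det\mathbf{J}$ is not identically zero as a function of $(\Lambda,\Omega)\in\Theta$, then $Y$ satisfies the half-trek criterion with respect to $v$.
   Context: A mixed graph is $G=(V,D,B)$ with $V=[m]$, $D$ directed edges $v\to w$, $B$ symmetric bidirected edges $v\leftrightarrow w$, no self-loops. $\mathrm{pa}(v)=\{w:w\to v\in D\}$, $\mathrm{sib}(v)=\{w:w\leftrightarrow v\in B\}$. $\mathbb{R}^D_{\mathrm{reg}}$: real $m\times m$ $\Lambda$ with $\lambda_{vw}=0$ for $v\to w\notin D$ and $I-\Lambda$ invertible; $\mathrm{PD}(B)$: positive definite symmetric $\Omega$ with $\omega_{vw}=0$ for $v\ne w$, $v\leftrightarrow w\notin B$; $\Theta=\mathbb{R}^D_{\mathrm{reg}}\times\mathrm{PD}(B)$; $\phi_G(\Lambda,\Omega)=(I-\Lambda)^{-T}\Omega(I-\Lambda)^{-1}$. A half-trek from $y$ to $w$ is a path $y\leftrightarrow w_0\to w_1\to\cdots\to w_r=w$ (left side $\{y\}$, right side $\{w_0,\dots,w_r\}$) or $y\to w_1\to\cdots\to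 w_r=w$, $r\ge0$ (left side $\{y\}$, right side $\{y,w_1,\dots,w_r\}$); nodes may repeat. A system of half-treks from $X$ to $Y$: half-treks with distinct sources forming $X$ and distinct targets forming $Y$; no sided intersection: pairwise disjoint left sides and pairwise disjoint right sides. $Y$ satisfies the half-trek criterion w.r.t. $v$ if $|Y|=|\mathrm{pa}(v)|$, $Y\cap(\{v\}\cup\mathrm{sib}(v))=\emptyset$, and there is a system of half-treks with no sided intersection from $Y$ to $\mathrm{pa}(v)$. *)

theory Defs
  imports "Jordan_Normal_Form.DL_Submatrix" "Jordan_Normal_Form.Determinant"
begin

text \<open>Mixed graph on vertex set V = {0..<m}. D: directed edges (v,w) meaning v -> w;
 B: bidirected edges, stored symmetrically.\<close>

definition mixed_graph :: "nat \<Rightarrow> (nat \<times> nat) set \<Rightarrow> (nat \<times> nat) set \<Rightarrow> bool" where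
  "mixed_graph m D B \<longleftrightarrow>
     D \<subseteq> {0..<m} \<times> {0..<m} \<and> B \<subseteq> {0..<m} \<times> {0..<m} \<and>
     (\<forall>v. (v,v) \<notin> D) \<and> (\<forall>v. (v,v) \<notin> B) \<and> (\<forall>v w. (v,w) \<in> B \<longrightarrow> (w,v) \<in> B)"

definition pa :: "(nat \<times> nat) set \<Rightarrow> nat \<Rightarrow> nat set" where
  "pa D v = {w. (w,v) \<in> D}"

definition sib :: "(nat \<times> nat) set \<Rightarrow> nat \<Rightarrow> nat set" where
  "sib B v = {w. (w,v) \<in> B}"

definition reg_D :: "nat \<Rightarrow> (nat \<times> nat) set \<Rightarrow> real mat set" where
  "reg_D m D = {L. L \<in> carrier_mat m m \<and>
      (\<forall>v<m. \<forall>w<m. (v,w) \<notin> D \<longrightarrow> L $$ (v,w) = 0) \<and>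
      invertible_mat (1\<^sub>m m - L)}"

definition PD_B :: "nat \<Rightarrow> (nat \<times> nat) set \<Rightarrow> real mat set" where
  "PD_B m B = {W. W \<in> carrier_mat m m \<and> transpose_mat W = W \<and>
      (\<forall>x \<in> carrier_vec m. x \<noteq> 0\<^sub>v m \<longrightarrow> x \<bullet> (W *\<^sub>v x) > 0) \<and>
      (\<forall>v<m. \<forall>w<m. v \<noteq> w \<and> (v,w) \<notin> B \<longrightarrow> W $$ (v,w) = 0)}"

definition Theta :: "nat \<Rightarrow> (nat \<times> nat) set \<Rightarrow> (nat \<times> nat) set \<Rightarrow> (real mat \<times> real mat) set" where
  "Theta m D B = reg_D m D \<times> PD_B m B"

definition mat_inv :: "nat \<Rightarrow> real mat \<Rightarrow> real mat" where
  "mat_inv m A = (SOME C. C \<in> carrier_mat m m \<and> A * C = 1\<^sub>m m \<and> C * A = 1\<^sub>m m)"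

definition phi :: "nat \<Rightarrow> real mat \<Rightarrow> real mat \<Rightarrow> real mat" where
  "phi m L W = transpose_mat (mat_inv m (1\<^sub>m m - L)) * W * mat_inv m (1\<^sub>m m - L)"

text \<open>A half-trek with source y is a pair (bi, p) where p is a nonempty node list
 forming a directed walk. If bi: the path is y <-> p!0 -> p!1 -> ... (right side = set p).
 If not bi: p!0 = y and the path is y -> p!1 -> ... (right side = set p, containing y). Nodes may repeat.\<close>

definition directed_walk :: "(nat \<times> nat) set \<Rightarrow> nat list \<Rightarrow> bool" where
  "directed_walk D p \<longleftrightarrow> (\<forall>i. Suc i < length p \<longrightarrow> (p ! i, p ! Suc i) \<in> D)"

definition is_half_trek :: "(nat \<times> nat) set \<Rightarrow> (nat \<times> nat) set \<Rightarrow> nat \<Rightarrow> nat \<Rightarrow> bool \<times> nat list \<Rightarrow> bool" where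
  "is_half_trek D B y w h \<longleftrightarrow>
     (let bi = fst h; p = snd h in
       p \<noteq> [] \<and> directed_walk D p \<and> last p = w \<and>
       (if bi then (y, hd p) \<in> B else hd p = y))"

definition left_side :: "nat \<Rightarrow> bool \<times> nat list \<Rightarrow> nat set" where
  "left_side y h = {y}"

definition right_side :: "nat \<Rightarrow> bool \<times> nat list \<Rightarrow> nat set" where
  "right_side y h = set (snd h)"

definition nsi_half_trek_system :: "(nat \<times> nat) set \<Rightarrow> (nat \<times> nat) set \<Rightarrow> nat set \<Rightarrow> nat set \<Rightarrow> bool" where
  "nsi_half_trek_system D B X Y \<longleftrightarrow>
     (\<exists>h tgt. bij_betw tgt X Y \<and> (\<forall>x\<in>X. is_half_trek D B x (tgt x) (h x)) \<and>
        (\<forall>x1\<in>X. \<forall>x2\<in>X. x1 \<noteq> x2 \<longrightarrow>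
            left_side x1 (h x1) \<inter> left_side x2 (h x2) = {} \<and>
            right_side x1 (h x1) \<inter> right_side x2 (h x2) = {}))"

definition HTC :: "(nat \<times> nat) set \<Rightarrow> (nat \<times> nat) set \<Rightarrow> nat \<Rightarrow> nat set \<Rightarrow> bool" where
  "HTC D B v Y \<longleftrightarrow> card Y = card (pa D v) \<and> Y \<inter> ({v} \<union> sib B v) = {} \<and>
     nsi_half_trek_system D B Y (pa D v)"

end

theory Submission
  imports Defs
begin

text \<open>
  Fix a parameter point (L, W) in Theta at which the matrix
  J = [(I - L)^T phi(L, W)]_{Y, pa(v)} is nonsingular. Since (I - L)^T phi(L, W) = W (I - L)^{-1},
  J is the Schur complement of I - L in the bordered matrix
     N = [ I - L   E_P ]
         [ W_Y     0   ],
  where E_P selects the columns pa(v) and W_Y consists of the rows Y of W. Hence N is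
  nonsingular, so some permutation p of its index set has all entries N(i, p i) nonzero. The
  zero pattern of N (L vanishes off D, W off B and the diagonal) makes p compatible with the
  graph, and the excursion of p from the row belonging to y in Y, until it re-enters the border
  block, is a half-trek from y into pa(v). Distinct excursions of a permutation are disjoint,
  which yields a system of half-treks without sided intersection.
\<close>

text \<open>For a permutation p and a set T, an element a of T
  leaves T under p and eventually comes back (every point of a permutation returns to itself).\<close>

definition return_time :: "('a \<Rightarrow> 'a) \<Rightarrow> 'a set \<Rightarrow> 'a \<Rightarrow> nat" where
  "return_time p T a = (LEAST s. 0 < s \<and> (p ^^ s) a \<in> T)"

definition excursion :: "('a \<Rightarrow> 'a) \<Rightarrow> 'a set \<Rightarrow> 'a \<Rightarrow> 'a list" where
  "excursion p T a = map (\<lambda>i. (p ^^ Suc i) a) [0..<return_time p T a - 1]"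

lemma return_time:
  assumes p: "permutation p" and a: "a \<in> T"
  shows return_time_pos: "0 < return_time p T a"
    and return_time_in: "(p ^^ return_time p T a) a \<in> T"
    and before_return_time: "\<And>s. 0 < s \<Longrightarrow> s < return_time p T a \<Longrightarrow> (p ^^ s) a \<notin> T"
proof -
  obtain r where "0 < r" "(p ^^ r) a = a" using permutation_self[OF p] by blast
  then have "0 < r \<and> (p ^^ r) a \<in> T" using a by simp
  then have "0 < return_time p T a \<and> (p ^^ return_time p T a) a \<in> T"
    unfolding return_time_def by (rule LeastI)
  then show "0 < return_time p T a" "(p ^^ return_time p T a) a \<in> T" by auto
  show "(p ^^ s) a \<notin> T" if "0 < s" "s < return_time p T a" for s
    using not_less_Least[of s "\<lambda>s. 0 < s \<and> (p ^^ s) a \<in> T"] that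
    unfolding return_time_def by blast
qed

lemma set_excursion:
  "set (excursion p T a) = (\<lambda>s. (p ^^ s) a) ` {0<..<return_time p T a}"
proof -
  have "{0<..<return_time p T a} = Suc ` {0..<return_time p T a - 1}"
    by (auto simp: image_iff intro!: bexI[of _ "x - 1" for x])
  moreover have "set (excursion p T a) = (\<lambda>s. (p ^^ s) a) ` Suc ` {0..<return_time p T a - 1}"
    unfolding excursion_def by (simp only: set_map set_upt image_image)
  ultimately show ?thesis by simp
qed

lemma excursion_outside:
  assumes "permutation p" "a \<in> T" "x \<in> set (excursion p T a)"
  shows "x \<notin> T"
  using assms before_return_time[OF assms(1,2)] by (auto simp: set_excursion)

lemma excursion_long:
  assumes "permutation p" "a \<in> T" "p a \<notin> T"
  shows "2 \<le> return_time p T a"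
proof -
  have "return_time p T a \<noteq> 1" using return_time_in[OF assms(1,2)] assms(3) by auto
  then show ?thesis using return_time_pos[OF assms(1,2)] by linarith
qed

lemma excursion_hd:
  assumes "permutation p" "a \<in> T" "p a \<notin> T"
  shows "excursion p T a \<noteq> [] \<and> hd (excursion p T a) = p a"
  using excursion_long[OF assms] by (simp add: excursion_def hd_map upt_rec)

lemma excursion_step:
  assumes "Suc i < length (excursion p T a)"
  shows "excursion p T a ! Suc i = p (excursion p T a ! i)"
  using assms by (simp add: excursion_def)

lemma excursion_exit:
  assumes "permutation p" "a \<in> T" "p a \<notin> T"
  shows "p (last (excursion p T a)) \<in> T"
proof -
  have long: "2 \<le> return_time p T a" by (rule excursion_long[OF assms])
  then have "last (excursion p T a) = (p ^^ Suc (return_time p T a - 2)) a"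
    by (simp add: excursion_def last_map numeral_2_eq_2 del: funpow.simps)
  also have "Suc (return_time p T a - 2) = return_time p T a - 1" using long by simp
  finally have "last (excursion p T a) = (p ^^ (return_time p T a - 1)) a" .
  then have "p (last (excursion p T a)) = (p ^^ Suc (return_time p T a - 1)) a" by simp
  also have "Suc (return_time p T a - 1) = return_time p T a" using long by simp
  finally show ?thesis using return_time_in[OF assms(1,2)] by simp
qed

text \<open>No point of a proper excursion is fixed by p: otherwise a itself would be fixed.\<close>
lemma excursion_no_fixpoint:
  assumes p: "permutation p" and "a \<in> T" "p a \<notin> T" "x \<in> set (excursion p T a)"
  shows "p x \<noteq> x"
proof
  assume fixed: "p x = x"
  obtain s where x: "x = (p ^^ s) a" using assms(4) by (auto simp: set_excursion)
  have "(p ^^ s) (p a) = (p ^^ s) a"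
    using fixed unfolding x by (metis comp_apply funpow_Suc_right funpow.simps(2))
  moreover have "inj (p ^^ s)" using bij_fn[OF permutation_bijective[OF p]] bij_is_inj by blast
  ultimately have "p a = a" by (simp add: inj_eq)
  then show False using assms(2,3) by simp
qed

text \<open>Excursions started at distinct points of T are disjoint: a common point would put one
  starting point on the other's excursion, which avoids T.\<close>
lemma excursions_disjoint:
  assumes p: "permutation p" and ab: "a \<in> T" "b \<in> T" "a \<noteq> b"
  shows "set (excursion p T a) \<inter> set (excursion p T b) = {}"
proof -
  have no_meet: "(p ^^ i) a \<noteq> (p ^^ j) b"
    if "a \<in> T" "b \<in> T" "a \<noteq> b" "i \<le> j" "0 < j" "j < return_time p T b" for a b i j
  proof
    assume meet: "(p ^^ i) a = (p ^^ j) b"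
    have "(p ^^ j) b = (p ^^ i) ((p ^^ (j - i)) b)"
      using \<open>i \<le> j\<close> by (metis funpow_add le_add_diff_inverse comp_apply)
    moreover have "inj (p ^^ i)" using bij_fn[OF permutation_bijective[OF p]] bij_is_inj by blast
    ultimately have a_eq: "a = (p ^^ (j - i)) b" using meet by (metis injD)
    show False
    proof (cases "i = j")
      case True then show False using a_eq \<open>a \<noteq> b\<close> by simp
    next
      case False
      then have "(p ^^ (j - i)) b \<notin> T"
        using that by (intro before_return_time[OF p]) auto
      then show False using a_eq \<open>a \<in> T\<close> by simp
    qed
  qed
  show ?thesis
  proof (rule ccontr)
    assume "set (excursion p T a) \<inter> set (excursion p T b) \<noteq> {}"
    then obtain i j where i: "0 < i" "i < return_time p T a"
      and j: "0 < j" "j < return_time p T b" and meet: "(p ^^ i) a = (p ^^ j) b"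
      by (auto simp: set_excursion)
    show False
    proof (cases "i \<le> j")
      case True then show False using no_meet[OF ab True j] meet by blast
    next
      case False then show False using no_meet[of b a j i] ab i meet by auto
    qed
  qed
qed

lemma pick_rank:
  assumes "finite Y" "y \<in> Y"
  shows "card {a \<in> Y. a < y} < card Y" "pick Y (card {a \<in> Y. a < y}) = y"
proof -
  have "{a \<in> Y. a < y} \<subset> Y" using assms(2) by auto
  then show "card {a \<in> Y. a < y} < card Y" using assms(1) psubset_card_mono by blast
  show "pick Y (card {a \<in> Y. a < y}) = y" using pick_card_in_set[OF assms(2)] .
qed

text \<open>A permutation of {0..<m + card Y} compatible with the graph: the extra index m + k
  (standing for the k-th element of Y) is sent to a node that is equal or bidirected-adjacent to
  it; a node moved within {0..<m} is moved along a directed edge; and a node sent into the extra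
  block lies in P. These are the support conditions of the bordered matrix below.\<close>
definition compatible_permutation ::
    "(nat \<times> nat) set \<Rightarrow> (nat \<times> nat) set \<Rightarrow> nat \<Rightarrow> nat set \<Rightarrow> nat set \<Rightarrow> (nat \<Rightarrow> nat) \<Rightarrow> bool" where
  "compatible_permutation D B m Y P p \<longleftrightarrow>
     p permutes {0..<m + card Y} \<and>
     (\<forall>k<card Y. p (m + k) < m \<and> (p (m + k) = pick Y k \<or> (pick Y k, p (m + k)) \<in> B)) \<and>
     (\<forall>i<m. p i < m \<longrightarrow> p i \<noteq> i \<longrightarrow> (i, p i) \<in> D) \<and>
     (\<forall>i<m. m \<le> p i \<longrightarrow> i \<in> P)"

text \<open>Following the excursion of p from the extra index m + k out of the extra block gives a
  half-trek from the k-th element of Y into P: its first step is bidirected unless it starts at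
  that element itself, and every later step moves a node along a directed edge.\<close>
lemma compatible_excursion:
  assumes comp: "compatible_permutation D B m Y P p" and k: "k < card Y"
  defines "ex \<equiv> excursion p {m..<m + card Y} (m + k)"
  shows "is_half_trek D B (pick Y k) (last ex) (p (m + k) \<noteq> pick Y k, ex)" "last ex \<in> P"
proof -
  define n where "n = card Y"
  define T where "T = {m..<m + n}"
  have perm: "p permutes {0..<m + n}"
    and src: "p (m + k) < m \<and> (p (m + k) = pick Y k \<or> (pick Y k, p (m + k)) \<in> B)"
    and dir: "\<And>i. i < m \<Longrightarrow> p i < m \<Longrightarrow> p i \<noteq> i \<Longrightarrow> (i, p i) \<in> D"
    and exits: "\<And>i. i < m \<Longrightarrow> m \<le> p i \<Longrightarrow> i \<in> P"
    using comp k unfolding compatible_permutation_def n_def by auto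
  have p: "permutation p" using permutes_imp_permutation[OF _ perm] by simp
  have start: "m + k \<in> T" "p (m + k) \<notin> T" using k src unfolding T_def n_def by auto
  have ex: "ex = excursion p T (m + k)" unfolding ex_def T_def n_def ..
  have hd: "ex \<noteq> [] \<and> hd ex = p (m + k)" unfolding ex using excursion_hd[OF p start] .
  have below: "x < m" if "x \<in> set ex" for x
  proof -
    have "x \<in> {0..<m + n}"
      using that permutes_in_funpow_image[OF perm, of "m + k"] k
      unfolding ex set_excursion n_def by auto
    moreover have "x \<notin> T" using excursion_outside[OF p start(1)] that unfolding ex .
    ultimately show ?thesis unfolding T_def by auto
  qed
  have walk: "directed_walk D ex"
    unfolding directed_walk_def
  proof (intro allI impI)
    fix i assume i: "Suc i < length ex"
    then have x: "ex ! i \<in> set ex" and px: "ex ! Suc i = p (ex ! i)"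
      using excursion_step[of i p T] unfolding ex by auto
    have "p (ex ! i) \<in> set ex" using px nth_mem[OF i] by simp
    then have "ex ! i < m" "p (ex ! i) < m" using below x by auto
    moreover have "p (ex ! i) \<noteq> ex ! i"
      using excursion_no_fixpoint[OF p start x[unfolded ex]] unfolding ex .
    ultimately show "(ex ! i, ex ! Suc i) \<in> D" using px dir by simp
  qed
  show "is_half_trek D B (pick Y k) (last ex) (p (m + k) \<noteq> pick Y k, ex)"
    using hd walk src unfolding is_half_trek_def by auto
  have "last ex < m" using below last_in_set hd by blast
  moreover have "p (last ex) \<in> T" using excursion_exit[OF p start] unfolding ex .
  ultimately show "last ex \<in> P" using exits unfolding T_def by auto
qed

text \<open>Combinatorial core: the excursions belonging to the elements of Y form a half-trek
  system from Y to P. Disjointness of excursions gives disjoint right sides, and hence also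
  distinct targets, which fill P by counting.\<close>
lemma half_trek_system_from_permutation:
  assumes comp: "compatible_permutation D B m Y P p"
    and fin: "finite Y" "finite P" and card: "card Y = card P"
  shows "nsi_half_trek_system D B Y P"
proof -
  define T where "T = {m..<m + card Y}"
  define rank where "rank y = card {a \<in> Y. a < y}" for y
  define h where "h y = (p (m + rank y) \<noteq> y, excursion p T (m + rank y))" for y
  define tgt where "tgt y = last (snd (h y))" for y
  have p: "permutation p"
    using comp permutes_imp_permutation[of "{0..<m + card Y}" p]
    unfolding compatible_permutation_def by simp
  have rank: "rank y < card Y" "pick Y (rank y) = y" if "y \<in> Y" for y
    using pick_rank[OF fin(1) that] unfolding rank_def by auto
  have half_trek: "is_half_trek D B y (tgt y) (h y)" and tgt_P: "tgt y \<in> P" if "y \<in> Y" for y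
    using compatible_excursion[OF comp rank(1)[OF that]] rank(2)[OF that]
    unfolding h_def tgt_def T_def by auto
  have disjoint: "set (snd (h y1)) \<inter> set (snd (h y2)) = {}"
    if "y1 \<in> Y" "y2 \<in> Y" "y1 \<noteq> y2" for y1 y2
  proof -
    have "m + rank y1 \<noteq> m + rank y2"
      using rank(2)[OF that(1)] rank(2)[OF that(2)] that(3) by auto
    moreover have "m + rank y \<in> T" if "y \<in> Y" for y using rank(1)[OF that] unfolding T_def by simp
    ultimately show ?thesis unfolding h_def using excursions_disjoint[OF p] that by simp
  qed
  have tgt_in: "tgt y \<in> set (snd (h y))" if "y \<in> Y" for y
    using half_trek[OF that] unfolding tgt_def is_half_trek_def Let_def by simp
  have inj: "inj_on tgt Y"
  proof (rule inj_onI, rule ccontr)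
    fix y1 y2 assume "y1 \<in> Y" "y2 \<in> Y" "tgt y1 = tgt y2" "y1 \<noteq> y2"
    then show False using disjoint[of y1 y2] tgt_in[of y1] tgt_in[of y2] by auto
  qed
  have "tgt ` Y \<subseteq> P" using tgt_P by auto
  then have "tgt ` Y = P" using card_subset_eq[OF fin(2)] card_image[OF inj] card by simp
  then have "bij_betw tgt Y P" using inj by (simp add: bij_betw_def)
  then show ?thesis
    unfolding nsi_half_trek_system_def
  proof (intro exI[of _ h] exI[of _ tgt] conjI ballI impI)
    show "is_half_trek D B y (tgt y) (h y)" if "y \<in> Y" for y using half_trek[OF that] .
    fix y1 y2 assume "y1 \<in> Y" "y2 \<in> Y" "y1 \<noteq> y2"
    then show "left_side y1 (h y1) \<inter> left_side y2 (h y2) = {}"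
      and "right_side y1 (h y1) \<inter> right_side y2 (h y2) = {}"
      using disjoint unfolding left_side_def right_side_def by auto
  qed
qed

lemma mat_inv_inverse:
  assumes A: "A \<in> carrier_mat m m" and inv: "invertible_mat A"
  shows "mat_inv m A \<in> carrier_mat m m" "A * mat_inv m A = 1\<^sub>m m" "mat_inv m A * A = 1\<^sub>m m"
proof -
  from inv obtain C where AC: "A * C = 1\<^sub>m (dim_row A)" and CA: "C * A = 1\<^sub>m (dim_row C)"
    unfolding invertible_mat_def inverts_mat_def by blast
  have "dim_col C = m" using arg_cong[OF AC, of dim_col] A by simp
  moreover have "dim_row C = m" using arg_cong[OF CA, of dim_col] A by simp
  ultimately have "\<exists>C. C \<in> carrier_mat m m \<and> A * C = 1\<^sub>m m \<and> C * A = 1\<^sub>m m"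
    using AC CA A by auto
  then have "mat_inv m A \<in> carrier_mat m m \<and> A * mat_inv m A = 1\<^sub>m m \<and> mat_inv m A * A = 1\<^sub>m m"
    unfolding mat_inv_def by (rule someI_ex)
  then show "mat_inv m A \<in> carrier_mat m m" "A * mat_inv m A = 1\<^sub>m m" "mat_inv m A * A = 1\<^sub>m m"
    by auto
qed

lemma transpose_mult_phi:
  assumes L: "L \<in> carrier_mat m m" and W: "W \<in> carrier_mat m m" and inv: "invertible_mat (1\<^sub>m m - L)"
  shows "transpose_mat (1\<^sub>m m - L) * phi m L W = W * mat_inv m (1\<^sub>m m - L)"
proof -
  define A where "A = 1\<^sub>m m - L"
  define M where "M = mat_inv m A"
  have A: "A \<in> carrier_mat m m" unfolding A_def using minus_carrier_mat[OF L] .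
  have M: "M \<in> carrier_mat m m" and MA: "M * A = 1\<^sub>m m"
    unfolding M_def using mat_inv_inverse[OF A inv[folded A_def]] by auto
  have "transpose_mat A * (transpose_mat M * W * M) = (transpose_mat A * transpose_mat M) * (W * M)"
    using A M W by (simp add: assoc_mult_mat[of _ m m _ m _ m])
  also have "transpose_mat A * transpose_mat M = transpose_mat (M * A)"
    using transpose_mult[OF M A] by simp
  also have "\<dots> = 1\<^sub>m m" using MA by simp
  finally show ?thesis using W M unfolding phi_def A_def[symmetric] M_def[symmetric] by simp
qed

definition row_selection :: "'a mat \<Rightarrow> nat set \<Rightarrow> 'a mat" where
  "row_selection X Y = mat (card Y) (dim_col X) (\<lambda>(i, j). X $$ (pick Y i, j))"

definition column_selector :: "nat \<Rightarrow> nat set \<Rightarrow> 'a :: zero_neq_one mat" where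
  "column_selector l P = mat l (card P) (\<lambda>(i, j). if i = pick P j then 1 else 0)"

lemma pick_below:
  assumes "P \<subseteq> {0..<l}" "j < card P"
  shows "pick P j < l"
  using pick_in_set[of j P] assms by auto

lemma mult_column_selector:
  fixes X :: "'a :: comm_ring_1 mat"
  assumes X: "X \<in> carrier_mat k l" and P: "P \<subseteq> {0..<l}" and ij: "i < k" "j < card P"
  shows "(X * column_selector l P) $$ (i, j) = X $$ (i, pick P j)"
proof -
  have "(X * column_selector l P) $$ (i, j) =
      (\<Sum>c = 0..<l. X $$ (i, c) * (if c = pick P j then 1 else 0))"
    using X ij by (simp add: column_selector_def scalar_prod_def)
  also have "\<dots> = X $$ (i, pick P j)"
    using pick_below[OF P ij(2)] by (simp add: if_distrib cong: if_cong)
  finally show ?thesis .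
qed

lemma submatrix_as_selection:
  fixes X :: "'a :: comm_ring_1 mat"
  assumes X: "X \<in> carrier_mat k l" and Y: "Y \<subseteq> {0..<k}" and P: "P \<subseteq> {0..<l}"
  shows "submatrix X Y P = row_selection X Y * column_selector l P"
proof -
  have rows: "{i. i < k \<and> i \<in> Y} = Y" and cols: "{j. j < l \<and> j \<in> P} = P"
    using Y P by auto
  have RX: "row_selection X Y \<in> carrier_mat (card Y) l"
    using X by (simp add: row_selection_def)
  show ?thesis
  proof (rule eq_matI)
    fix i j assume "i < dim_row (row_selection X Y * column_selector l P)"
      "j < dim_col (row_selection X Y * column_selector l P)"
    then have ij: "i < card Y" "j < card P" using RX by (auto simp: column_selector_def)
    have "submatrix X Y P $$ (i, j) = X $$ (pick Y i, pick P j)"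
      using X ij rows cols by (intro submatrix_index) auto
    also have "\<dots> = (row_selection X Y * column_selector l P) $$ (i, j)"
      using mult_column_selector[OF RX P ij] ij pick_below[OF P ij(2)] X
      by (simp add: row_selection_def)
    finally show "submatrix X Y P $$ (i, j) = (row_selection X Y * column_selector l P) $$ (i, j)" .
  qed (use X RX rows cols in \<open>auto simp: dim_submatrix column_selector_def\<close>)
qed

lemma row_selection_mult:
  fixes W :: "'a :: comm_ring_1 mat"
  assumes W: "W \<in> carrier_mat k l" and M: "M \<in> carrier_mat l r" and Y: "Y \<subseteq> {0..<k}"
  shows "row_selection (W * M) Y = row_selection W Y * M"
proof (rule eq_matI)
  fix i j assume ij: "i < dim_row (row_selection W Y * M)" "j < dim_col (row_selection W Y * M)"
  then have "i < card Y" "j < r" using M by (auto simp: row_selection_def)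
  moreover have "pick Y i < k" using pick_below[OF Y] \<open>i < card Y\<close> .
  ultimately show "row_selection (W * M) Y $$ (i, j) = (row_selection W Y * M) $$ (i, j)"
    using W M by (simp add: row_selection_def scalar_prod_def row_def)
qed (use W M in \<open>auto simp: row_selection_def\<close>)

text \<open>Schur complement: if A M = I and the Schur complement R M C is nonsingular, then the
  bordered matrix [A C; R 0] is nonsingular. Multiplying by [I -MC; 0 I] clears the upper-right
  block.\<close>
lemma det_bordered_nonzero:
  fixes A M R C :: "'a :: field mat"
  assumes A: "A \<in> carrier_mat m m" and M: "M \<in> carrier_mat m m" and AM: "A * M = 1\<^sub>m m"
    and C: "C \<in> carrier_mat m n" and R: "R \<in> carrier_mat n m"
    and schur: "det (R * (M * C)) \<noteq> 0"
  shows "det (four_block_mat A C R (0\<^sub>m n n)) \<noteq> 0"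
proof -
  define T where "T = four_block_mat (1\<^sub>m m) (- (M * C)) (0\<^sub>m n m) (1\<^sub>m n)"
  have MC: "M * C \<in> carrier_mat m n" using M C by simp
  have N: "four_block_mat A C R (0\<^sub>m n n) \<in> carrier_mat (m + n) (m + n)" using A by simp
  have T: "T \<in> carrier_mat (m + n) (m + n)" unfolding T_def by simp
  have neg: "X * (- (M * C)) = - (X * (M * C))" if "X \<in> carrier_mat k m" for X k
    by (rule uminus_mult_right_mat) (use that MC in auto)
  have "A * (- (M * C)) = - (A * (M * C))" using neg[OF A] .
  also have "A * (M * C) = C" using assoc_mult_mat[OF A M C] AM C by simp
  finally have "A * (- (M * C)) = - C" .
  moreover have "C * 1\<^sub>m n = C" "R * 1\<^sub>m m = R" "A * 1\<^sub>m m = A" using A C R by simp_all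
  ultimately have "four_block_mat A C R (0\<^sub>m n n) * T = four_block_mat A (0\<^sub>m m n) R (- (R * (M * C)))"
    unfolding T_def mult_four_block_mat[OF A C R zero_carrier_mat one_carrier_mat
        uminus_carrier_mat[OF MC] zero_carrier_mat one_carrier_mat]
    using A C R MC neg[OF R] by (simp add: uminus_l_inv_mat)
  then have "det (four_block_mat A C R (0\<^sub>m n n)) * det T = det A * det (- (R * (M * C)))"
    using det_mult[OF N T] det_four_block_mat_upper_right_zero[OF A refl, of R] R MC by simp
  moreover have "det A \<noteq> 0" using det_mult[OF A M] AM by auto
  moreover have "det (- (R * (M * C))) \<noteq> 0" using schur det_0_negate[of "R * (M * C)" n] R MC by simp
  ultimately show ?thesis by auto
qed

text \<open>A nonsingular matrix has a transversal: by the Leibniz formula some permutation has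
  all its diagonal entries nonzero.\<close>
lemma det_nonzero_transversal:
  assumes N: "N \<in> carrier_mat k k" and "det N \<noteq> 0"
  obtains p where "p permutes {0..<k}" "\<And>i. i < k \<Longrightarrow> N $$ (i, p i) \<noteq> 0"
proof -
  have "(\<Sum>p \<in> {p. p permutes {0..<k}}. signof p * (\<Prod>i = 0..<k. N $$ (i, p i))) \<noteq> 0"
    using det_def'[OF N] assms(2) by simp
  then obtain p where "p permutes {0..<k}" "signof p * (\<Prod>i = 0..<k. N $$ (i, p i)) \<noteq> 0"
    by (rule sum.not_neutral_contains_not_neutral) auto
  moreover from this(2) have "N $$ (i, p i) \<noteq> 0" if "i < k" for i
    using that prod_zero[of "{0..<k}" "\<lambda>i. N $$ (i, p i)"] by fastforce
  ultimately show ?thesis using that by blast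
qed

text \<open>The bordered matrix [I - L, column selector of P; rows Y of W, 0]. Its transversals
  are the graph-compatible permutations, and it is nonsingular whenever the matrix of the
  criterion is.\<close>
definition bordered_matrix :: "nat \<Rightarrow> real mat \<Rightarrow> real mat \<Rightarrow> nat set \<Rightarrow> nat set \<Rightarrow> real mat" where
  "bordered_matrix m L W Y P =
     four_block_mat (1\<^sub>m m - L) (column_selector m P) (row_selection W Y) (0\<^sub>m (card Y) (card Y))"

lemma theta_parameters:
  assumes "(L, W) \<in> Theta m D B"
  shows "L \<in> carrier_mat m m" "invertible_mat (1\<^sub>m m - L)"
    "\<And>i j. i < m \<Longrightarrow> j < m \<Longrightarrow> (i, j) \<notin> D \<Longrightarrow> L $$ (i, j) = 0"
    "W \<in> carrier_mat m m"
    "\<And>i j. i < m \<Longrightarrow> j < m \<Longrightarrow> i \<noteq> j \<Longrightarrow> (i, j) \<notin> B \<Longrightarrow> W $$ (i, j) = 0"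
  using assms unfolding Theta_def reg_D_def PD_B_def by auto

text \<open>The submatrix of the criterion equals the Schur complement (rows Y of W) (I - L)^{-1}
  (column selector of P), so the bordered matrix is nonsingular.\<close>
lemma det_bordered_matrix:
  assumes LW: "(L, W) \<in> Theta m D B" and Y: "Y \<subseteq> {0..<m}" and P: "P \<subseteq> {0..<m}"
    and card: "card P = card Y"
    and J: "det (submatrix (transpose_mat (1\<^sub>m m - L) * phi m L W) Y P) \<noteq> 0"
  shows "det (bordered_matrix m L W Y P) \<noteq> 0"
proof -
  note \<Theta> = theta_parameters[OF LW]
  define M where "M = mat_inv m (1\<^sub>m m - L)"
  have A: "1\<^sub>m m - L \<in> carrier_mat m m" using minus_carrier_mat[OF \<Theta>(1)] .
  have M: "M \<in> carrier_mat m m" and AM: "(1\<^sub>m m - L) * M = 1\<^sub>m m"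
    unfolding M_def using mat_inv_inverse[OF A \<Theta>(2)] by auto
  have R: "row_selection W Y \<in> carrier_mat (card Y) m" using \<Theta>(4) by (simp add: row_selection_def)
  have C: "column_selector m P \<in> carrier_mat m (card Y)" using card by (simp add: column_selector_def)
  have "submatrix (transpose_mat (1\<^sub>m m - L) * phi m L W) Y P = submatrix (W * M) Y P"
    using transpose_mult_phi[OF \<Theta>(1,4,2)] unfolding M_def by simp
  also have "\<dots> = row_selection (W * M) Y * column_selector m P"
    using \<Theta>(4) M Y P by (intro submatrix_as_selection) auto
  also have "\<dots> = row_selection W Y * (M * column_selector m P)"
    using row_selection_mult[OF \<Theta>(4) M Y] assoc_mult_mat[OF R M C] by simp
  finally show ?thesis
    using J det_bordered_nonzero[OF A M AM C R] unfolding bordered_matrix_def by simp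
qed

text \<open>Reading off the block structure: a transversal of the bordered matrix is compatible
  with the graph, because L vanishes off D and W vanishes off B and the diagonal.\<close>
lemma bordered_transversal_compatible:
  assumes LW: "(L, W) \<in> Theta m D B" and Y: "Y \<subseteq> {0..<m}" and P: "P \<subseteq> {0..<m}"
    and card: "card P = card Y"
    and perm: "p permutes {0..<m + card Y}"
    and nz: "\<And>i. i < m + card Y \<Longrightarrow> bordered_matrix m L W Y P $$ (i, p i) \<noteq> 0"
  shows "compatible_permutation D B m Y P p"
proof -
  note \<Theta> = theta_parameters[OF LW]
  define n where "n = card Y"
  have p_below: "p i < m + n" if "i < m + n" for i
    using permutes_in_image[OF perm] that unfolding n_def by auto
  have entry: "bordered_matrix m L W Y P $$ (i, j) =
      (if i < m then if j < m then (1\<^sub>m m - L) $$ (i, j) else (if i = pick P (j - m) then 1 else 0)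
       else if j < m then W $$ (pick Y (i - m), j) else 0)" if "i < m + n" "j < m + n" for i j
    using that \<Theta>(1,4) card unfolding bordered_matrix_def n_def
    by (simp add: column_selector_def row_selection_def)
  have border: "p (m + k) < m \<and> (p (m + k) = pick Y k \<or> (pick Y k, p (m + k)) \<in> B)" if "k < n" for k
  proof -
    have nz_k: "bordered_matrix m L W Y P $$ (m + k, p (m + k)) \<noteq> 0" using nz that n_def by simp
    then have below: "p (m + k) < m"
      using entry[of "m + k" "p (m + k)"] p_below[of "m + k"] that by (auto split: if_splits)
    moreover have "pick Y k < m" using pick_below[OF Y] that n_def by simp
    ultimately show ?thesis
      using nz_k entry[of "m + k" "p (m + k)"] \<Theta>(5)[of "pick Y k" "p (m + k)"] that by fastforce
  qed
  have directed: "(i, p i) \<in> D" if "i < m" "p i < m" "p i \<noteq> i" for i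
    using nz[of i] entry[of i "p i"] \<Theta>(1,3) that by auto
  have exits: "i \<in> P" if "i < m" "m \<le> p i" for i
  proof -
    have "p i - m < card P" using p_below[of i] that card n_def by auto
    then have "pick P (p i - m) \<in> P" by (rule pick_in_set[OF disjI1])
    moreover have "i = pick P (p i - m)"
      using nz[of i] entry[of i "p i"] p_below[of i] that n_def by (auto split: if_splits)
    ultimately show ?thesis by simp
  qed
  show ?thesis
    unfolding compatible_permutation_def using perm border directed exits n_def by auto
qed

theorem mainTheorem14:
  fixes m :: nat and D B :: "(nat \<times> nat) set" and v :: nat and Y :: "nat set"
  assumes "mixed_graph m D B"
    and "v < m"
    and "Y \<subseteq> {0..<m} - ({v} \<union> sib B v)"
    and "card Y = card (pa D v)"
    and "\<exists>(L, W) \<in> Theta m D B.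
           det (submatrix (transpose_mat (1\<^sub>m m - L) * phi m L W) Y (pa D v)) \<noteq> 0"
  shows "HTC D B v Y"
proof -
  define P where "P = pa D v"
  have P: "P \<subseteq> {0..<m}" using assms(1) unfolding mixed_graph_def P_def pa_def by auto
  have Y: "Y \<subseteq> {0..<m}" using assms(3) by auto
  have card: "card P = card Y" using assms(4) unfolding P_def by simp
  obtain L W where LW: "(L, W) \<in> Theta m D B"
    and J: "det (submatrix (transpose_mat (1\<^sub>m m - L) * phi m L W) Y P) \<noteq> 0"
    using assms(5) unfolding P_def by auto
  have N: "bordered_matrix m L W Y P \<in> carrier_mat (m + card Y) (m + card Y)"
    unfolding bordered_matrix_def
    using four_block_carrier_mat[OF minus_carrier_mat[OF theta_parameters(1)[OF LW]] zero_carrier_mat] .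
  obtain p where "p permutes {0..<m + card Y}"
    and "\<And>i. i < m + card Y \<Longrightarrow> bordered_matrix m L W Y P $$ (i, p i) \<noteq> 0"
    using det_nonzero_transversal[OF N det_bordered_matrix[OF LW Y P card J]] by blast
  then have "compatible_permutation D B m Y P p"
    using bordered_transversal_compatible[OF LW Y P card] by blast
  then have "nsi_half_trek_system D B Y P"
    using half_trek_system_from_permutation finite_subset[OF Y] finite_subset[OF P] card by simp
  then show ?thesis unfolding HTC_def P_def using assms(3,4) by auto
qed

end
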